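(* Let $n\geq 2$ and let $G$ be the Coxeter group with generators $t_0,t_1,\dots,t_{n-1}$ and relations $t_j^2=1$ for all $j$; $(t_0t_2)^4=1$ (if $n\geq 3$); $(t_0t_j)^2=1$ for $3\leq j\leq n-1$; $(t_it_{i+1})^3=1$ for $1\leq i\leq n-2$; $(t_it_j)^2=1$ for $1\leq i,j\leq n-1$ with $|i-j|\geq 2$; and no relation between $t_0$ and $t_1$ (i.e. $m(t_0,t_1)=\infty$). Then the assignment $t_0\mapsto\sigma_{12}$, $t_i\mapsto\alpha_{(i,i+1)}$ ($1\leq i\leq n-1$) extends to a surjective homomorphism $G\to\mathrm{Aut}(W_n)$. Moreover, the subgroup of $\mathrm{Aut}(W_n)$ generated by $\{\sigma_{12}\}\cup\{\alpha_{(i,i+1)}\mid i=2,\dots,n-1\}$ is finite.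
   Context: $W_n=\langle s_1,\dots,s_n\mid s_1^2,\dots,s_n^2\rangle$. For $1\leq i\neq j\leq n$, $\sigma_{ij}\in\mathrm{Aut}(W_n)$ is defined by $\sigma_{ij}(s_j)=s_is_js_i$ and $\sigma_{ij}(s_k)=s_k$ for $k\neq j$. For $\pi\in\mathrm{Sym}(n)$, $\alpha_\pi\in\mathrm{Aut}(W_n)$ is defined by $\alpha_\pi(s_k)=s_{\pi(k)}$. *)

theory Defs
  imports "HOL-Algebra.Algebra" "HOL-Combinatorics.Transposition"
begin

inductive_set pres_eq :: "'a set \<Rightarrow> 'a list set \<Rightarrow> ('a list \<times> 'a list) set"
  for S :: "'a set" and R :: "'a list set" where
  refl: "set w \<subseteq> S \<Longrightarrow> (w, w) \<in> pres_eq S R"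
| sym: "(u, v) \<in> pres_eq S R \<Longrightarrow> (v, u) \<in> pres_eq S R"
| trans: "(u, v) \<in> pres_eq S R \<Longrightarrow> (v, w) \<in> pres_eq S R \<Longrightarrow> (u, w) \<in> pres_eq S R"
| rel: "set u \<subseteq> S \<Longrightarrow> set v \<subseteq> S \<Longrightarrow> r \<in> R \<Longrightarrow> set r \<subseteq> S
        \<Longrightarrow> (u @ r @ v, u @ v) \<in> pres_eq S R"

text \<open>The quotient of the free monoid S* by this congruence.  When R contains
  [a,a] for every a in S (all generators are involutions) this is exactly the
  group with presentation (S | R).\<close>

definition pres_group :: "'a set \<Rightarrow> 'a list set \<Rightarrow> 'a list set monoid" where
  "pres_group S R =
     \<lparr>carrier = lists S // pres_eq S R,
      monoid.mult = (\<lambda>A B. \<Union>{pres_eq S R `` {x @ y} | x y. x \<in> A \<and> y \<in> B}),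
      monoid.one = pres_eq S R `` {[]}\<rparr>"

definition pcls :: "'a set \<Rightarrow> 'a list set \<Rightarrow> 'a list \<Rightarrow> 'a list set" where
  "pcls S R w = pres_eq S R `` {w}"

definition cox_word :: "'a \<Rightarrow> 'a \<Rightarrow> nat \<Rightarrow> 'a list" where
  "cox_word a b m = concat (replicate m [a, b])"

definition W_gens :: "nat \<Rightarrow> nat set" where
  "W_gens n = {1..n}"

definition W_rels :: "nat \<Rightarrow> nat list set" where
  "W_rels n = {[k, k] | k. k \<in> {1..n}}"

definition W :: "nat \<Rightarrow> nat list set monoid" where
  "W n = pres_group (W_gens n) (W_rels n)"

text \<open>Endomorphism of W_n determined by the images f k (words) of the generators s_k.\<close>

definition W_subst :: "nat \<Rightarrow> (nat \<Rightarrow> nat list) \<Rightarrow> nat list set \<Rightarrow> nat list set" where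
  "W_subst n f = (\<lambda>A \<in> carrier (W n).
      \<Union>{pcls (W_gens n) (W_rels n) (concat (map f w)) | w. w \<in> A})"

definition sigma :: "nat \<Rightarrow> nat \<Rightarrow> nat \<Rightarrow> nat list set \<Rightarrow> nat list set" where
  "sigma n i j = W_subst n (\<lambda>k. if k = j then [i, j, i] else [k])"

definition alpha :: "nat \<Rightarrow> (nat \<Rightarrow> nat) \<Rightarrow> nat list set \<Rightarrow> nat list set" where
  "alpha n p = W_subst n (\<lambda>k. [p k])"

text \<open>Generators t_0,...,t_(n-1) are represented by the numbers 0,...,n-1.
  m(t_0,t_1) = infinity: no relator between t_0 and t_1.\<close>

definition G_gens :: "nat \<Rightarrow> nat set" where
  "G_gens n = {..<n}"

definition G_rels :: "nat \<Rightarrow> nat list set" where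
  "G_rels n =
     {[j, j] | j. j < n}
   \<union> (if 3 \<le> n then {cox_word 0 2 4} else {})
   \<union> {cox_word 0 j 2 | j. 3 \<le> j \<and> j < n}
   \<union> {cox_word i (i + 1) 3 | i. 1 \<le> i \<and> i + 1 < n}
   \<union> {cox_word i j 2 | i j. 1 \<le> i \<and> i < n \<and> 1 \<le> j \<and> j < n \<and> (i + 2 \<le> j \<or> j + 2 \<le> i)}"

definition G :: "nat \<Rightarrow> nat list set monoid" where
  "G n = pres_group (G_gens n) (G_rels n)"

definition G_gen :: "nat \<Rightarrow> nat \<Rightarrow> nat list set" where
  "G_gen n j = pcls (G_gens n) (G_rels n) [j]"

end

theory Submission
  imports Defs "HOL-Library.Sublist" "HOL-Combinatorics.Permutations"
begin

text \<open>
  The assignment respects the Coxeter relations of \<open>G\<close>, which is checked by composing the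
  corresponding substitutions of words.  Surjectivity is a Nielsen-type reduction.  An
  automorphism of \<open>W\<^sub>n\<close> sends each \<open>s\<^sub>k\<close> to an involution, i.e.\ to a reduced palindrome
  \<open>u a rev u\<close>.  If for some \<open>i \<noteq> j\<close> the half \<open>u\<^sub>i a\<^sub>i\<close> is a prefix of \<open>u\<^sub>j a\<^sub>j\<close>, composing
  with \<open>\<sigma>\<^sub>i\<^sub>j\<close> strictly shortens the image of \<open>s\<^sub>j\<close>.  Otherwise no cancellation in a product
  of images reaches a middle letter, so only single letters can be hit and the automorphism
  permutes the generators.  All \<open>\<sigma>\<^sub>i\<^sub>j\<close> are conjugate to \<open>\<sigma>\<^sub>1\<^sub>2\<close> by permutations, and the
  permutations are generated by the adjacent transpositions.

  For finiteness, \<open>\<sigma>\<^sub>1\<^sub>2\<close> and \<open>\<alpha>\<^sub>(\<^sub>i\<^sub>,\<^sub>i\<^sub>+\<^sub>1\<^sub>)\<close> with \<open>i \<ge> 2\<close> all fix \<open>s\<^sub>1\<close> and send each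
  other \<open>s\<^sub>k\<close> to some \<open>s\<^sub>a\<close> or \<open>s\<^sub>1 s\<^sub>a s\<^sub>1\<close> with \<open>a \<ge> 2\<close>; such substitutions are closed under
  composition and there are finitely many of them.
\<close>

section \<open>Groups given by presentations\<close>

lemma pres_eq_lists: "(u, v) \<in> pres_eq S R \<Longrightarrow> set u \<subseteq> S \<and> set v \<subseteq> S"
  by (induction rule: pres_eq.induct) auto

lemma pres_eq_context:
  "(u, v) \<in> pres_eq S R \<Longrightarrow> set x \<subseteq> S \<Longrightarrow> set y \<subseteq> S \<Longrightarrow> (x @ u @ y, x @ v @ y) \<in> pres_eq S R"
proof (induction rule: pres_eq.induct)
  case (refl w) thus ?case by (intro pres_eq.refl) auto
next
  case (sym u v) thus ?case by (blast intro: pres_eq.sym)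
next
  case (trans u v w) thus ?case by (blast intro: pres_eq.trans)
next
  case (rel u v r)
  have "((x @ u) @ r @ (v @ y), (x @ u) @ (v @ y)) \<in> pres_eq S R"
    by (rule pres_eq.rel) (use rel in auto)
  thus ?case by simp
qed

lemma pres_eq_append:
  assumes "(u, u') \<in> pres_eq S R" "(v, v') \<in> pres_eq S R"
  shows "(u @ v, u' @ v') \<in> pres_eq S R"
proof -
  have l: "set v \<subseteq> S" "set u' \<subseteq> S" using assms by (auto dest: pres_eq_lists)
  have "([] @ u @ v, [] @ u' @ v) \<in> pres_eq S R"
    using pres_eq_context[OF assms(1), of "[]" v] l by auto
  moreover have "(u' @ v @ [], u' @ v' @ []) \<in> pres_eq S R"
    using pres_eq_context[OF assms(2), of u' "[]"] l by auto
  ultimately show ?thesis by (auto intro: pres_eq.trans)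
qed

lemma pcls_refl: "set u \<subseteq> S \<Longrightarrow> u \<in> pcls S R u"
  by (auto simp: pcls_def intro: pres_eq.refl)

lemma mem_pcls_iff: "w \<in> pcls S R u \<longleftrightarrow> (u, w) \<in> pres_eq S R"
  by (simp add: pcls_def)

lemma pcls_eq_iff:
  assumes "set u \<subseteq> S"
  shows "pcls S R u = pcls S R v \<longleftrightarrow> (u, v) \<in> pres_eq S R"
proof
  assume "pcls S R u = pcls S R v"
  hence "(v, u) \<in> pres_eq S R" using pcls_refl[OF assms] by (auto simp: pcls_def)
  thus "(u, v) \<in> pres_eq S R" by (rule pres_eq.sym)
qed (auto simp: pcls_def intro: pres_eq.trans pres_eq.sym)

lemma carrier_pres_group: "carrier (pres_group S R) = {pcls S R w | w. set w \<subseteq> S}"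
  by (auto simp: pres_group_def quotient_def pcls_def)

lemma carrier_pres_groupE:
  assumes "A \<in> carrier (pres_group S R)"
  obtains w where "set w \<subseteq> S" "A = pcls S R w"
  using assms by (auto simp: carrier_pres_group)

lemma pcls_in_carrier: "set w \<subseteq> S \<Longrightarrow> pcls S R w \<in> carrier (pres_group S R)"
  by (auto simp: carrier_pres_group)

lemma carrier_pres_group_lists: "A \<in> carrier (pres_group S R) \<Longrightarrow> w \<in> A \<Longrightarrow> set w \<subseteq> S"
  by (auto simp: carrier_pres_group pcls_def dest: pres_eq_lists)

lemma one_pres_group: "\<one>\<^bsub>pres_group S R\<^esub> = pcls S R []"
  by (simp add: pres_group_def pcls_def)

lemma mult_pres_group:
  assumes "set u \<subseteq> S" "set v \<subseteq> S"
  shows "pcls S R u \<otimes>\<^bsub>pres_group S R\<^esub> pcls S R v = pcls S R (u @ v)"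
proof -
  have "pres_eq S R `` {x @ y} = pcls S R (u @ v)" if "x \<in> pcls S R u" "y \<in> pcls S R v" for x y
  proof -
    have "(u @ v, x @ y) \<in> pres_eq S R" using that by (auto simp: pcls_def intro: pres_eq_append)
    thus ?thesis using pcls_eq_iff[of "u @ v" S R "x @ y"] assms by (simp add: pcls_def)
  qed
  hence "{pres_eq S R `` {x @ y} | x y. x \<in> pcls S R u \<and> y \<in> pcls S R v} = {pcls S R (u @ v)}"
    using pcls_refl[OF assms(1)] pcls_refl[OF assms(2)] by blast
  thus ?thesis by (simp add: pres_group_def)
qed

lemma pres_eq_rev_cancel:
  assumes "\<forall>a\<in>S. [a, a] \<in> R" "set w \<subseteq> S"
  shows "(rev w @ w, []) \<in> pres_eq S R"
  using assms(2)
proof (induction w)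
  case Nil thus ?case by (auto intro: pres_eq.refl)
next
  case (Cons a w)
  have "(rev w @ [a, a] @ w, rev w @ w) \<in> pres_eq S R"
    by (rule pres_eq.rel) (use Cons assms in auto)
  thus ?case using Cons by (auto intro: pres_eq.trans)
qed

lemma group_pres_group:
  assumes "\<forall>a\<in>S. [a, a] \<in> R"
  shows "group (pres_group S R)"
proof (rule groupI)
  fix x assume "x \<in> carrier (pres_group S R)"
  then obtain w where w: "set w \<subseteq> S" "x = pcls S R w" by (auto elim!: carrier_pres_groupE)
  have "pcls S R (rev w) \<otimes>\<^bsub>pres_group S R\<^esub> x = pcls S R []"
    using w pres_eq_rev_cancel[OF assms w(1)] pcls_eq_iff[of "rev w @ w" S R "[]"]
    by (simp add: mult_pres_group)
  thus "\<exists>y\<in>carrier (pres_group S R). y \<otimes>\<^bsub>pres_group S R\<^esub> x = \<one>\<^bsub>pres_group S R\<^esub>"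
    using w by (auto simp: one_pres_group intro!: bexI[of _ "pcls S R (rev w)"] pcls_in_carrier)
next
  fix x y assume "x \<in> carrier (pres_group S R)" "y \<in> carrier (pres_group S R)"
  then obtain u v where "set u \<subseteq> S" "x = pcls S R u" "set v \<subseteq> S" "y = pcls S R v"
    by (auto elim!: carrier_pres_groupE)
  thus "x \<otimes>\<^bsub>pres_group S R\<^esub> y \<in> carrier (pres_group S R)"
    by (simp add: mult_pres_group pcls_in_carrier)
next
  fix x y z assume "x \<in> carrier (pres_group S R)" "y \<in> carrier (pres_group S R)"
    "z \<in> carrier (pres_group S R)"
  thus "x \<otimes>\<^bsub>pres_group S R\<^esub> y \<otimes>\<^bsub>pres_group S R\<^esub> z =
        x \<otimes>\<^bsub>pres_group S R\<^esub> (y \<otimes>\<^bsub>pres_group S R\<^esub> z)"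
    by (auto elim!: carrier_pres_groupE simp: mult_pres_group)
qed (auto elim!: carrier_pres_groupE simp: mult_pres_group one_pres_group intro: pcls_in_carrier)

definition eval_word :: "('b, 'c) monoid_scheme \<Rightarrow> ('a \<Rightarrow> 'b) \<Rightarrow> 'a list \<Rightarrow> 'b" where
  "eval_word H f w = foldr (\<lambda>a b. f a \<otimes>\<^bsub>H\<^esub> b) w \<one>\<^bsub>H\<^esub>"

lemma eval_word_simps [simp]:
  "eval_word H f [] = \<one>\<^bsub>H\<^esub>" "eval_word H f (a # w) = f a \<otimes>\<^bsub>H\<^esub> eval_word H f w"
  by (simp_all add: eval_word_def)

lemma eval_word_closed: "monoid H \<Longrightarrow> f ` set w \<subseteq> carrier H \<Longrightarrow> eval_word H f w \<in> carrier H"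
  by (induction w) (auto intro: monoid.m_closed)

lemma eval_word_append:
  "monoid H \<Longrightarrow> f ` set u \<subseteq> carrier H \<Longrightarrow> f ` set v \<subseteq> carrier H
   \<Longrightarrow> eval_word H f (u @ v) = eval_word H f u \<otimes>\<^bsub>H\<^esub> eval_word H f v"
  by (induction u) (auto simp: monoid.m_assoc eval_word_closed)

lemma eval_word_pres_eq:
  assumes "monoid H" "f ` S \<subseteq> carrier H" "\<forall>r\<in>R. set r \<subseteq> S \<longrightarrow> eval_word H f r = \<one>\<^bsub>H\<^esub>"
  shows "(u, v) \<in> pres_eq S R \<Longrightarrow> eval_word H f u = eval_word H f v"
proof (induction rule: pres_eq.induct)
  case (rel u v r)
  have c: "f ` set u \<subseteq> carrier H" "f ` set v \<subseteq> carrier H" "f ` set r \<subseteq> carrier H"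
    using rel.hyps assms(2) by blast+
  have "eval_word H f (u @ r @ v) = eval_word H f u \<otimes>\<^bsub>H\<^esub> (eval_word H f r \<otimes>\<^bsub>H\<^esub> eval_word H f v)"
    using eval_word_append[OF assms(1) c(1), of "r @ v"] eval_word_append[OF assms(1) c(3) c(2)] c
    by (simp add: image_Un)
  also have "\<dots> = eval_word H f (u @ v)"
    using rel assms c by (simp add: eval_word_closed eval_word_append monoid.l_one)
  finally show ?case .
qed auto

definition pres_lift :: "('b, 'c) monoid_scheme \<Rightarrow> ('a \<Rightarrow> 'b) \<Rightarrow> 'a list set \<Rightarrow> 'b" where
  "pres_lift H f A = eval_word H f (SOME w. w \<in> A)"

lemma pres_lift_pcls:
  assumes "monoid H" "f ` S \<subseteq> carrier H" "\<forall>r\<in>R. set r \<subseteq> S \<longrightarrow> eval_word H f r = \<one>\<^bsub>H\<^esub>"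
    and "set w \<subseteq> S"
  shows "pres_lift H f (pcls S R w) = eval_word H f w"
proof -
  have "(SOME x. x \<in> pcls S R w) \<in> pcls S R w" using pcls_refl[OF assms(4)] by (rule someI)
  thus ?thesis unfolding pres_lift_def mem_pcls_iff using eval_word_pres_eq[OF assms(1-3)] by metis
qed

lemma pres_lift_hom:
  assumes "monoid H" "f ` S \<subseteq> carrier H" "\<forall>r\<in>R. set r \<subseteq> S \<longrightarrow> eval_word H f r = \<one>\<^bsub>H\<^esub>"
  shows "pres_lift H f \<in> hom (pres_group S R) H"
proof (rule homI)
  fix x assume "x \<in> carrier (pres_group S R)"
  then obtain w where "set w \<subseteq> S" "x = pcls S R w" by (auto elim!: carrier_pres_groupE)
  thus "pres_lift H f x \<in> carrier H" using assms by (auto simp: pres_lift_pcls intro!: eval_word_closed)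
next
  fix x y assume "x \<in> carrier (pres_group S R)" "y \<in> carrier (pres_group S R)"
  then obtain u v where uv: "set u \<subseteq> S" "x = pcls S R u" "set v \<subseteq> S" "y = pcls S R v"
    by (auto elim!: carrier_pres_groupE)
  have "f ` set u \<subseteq> carrier H" "f ` set v \<subseteq> carrier H" using uv assms(2) by blast+
  thus "pres_lift H f (x \<otimes>\<^bsub>pres_group S R\<^esub> y) = pres_lift H f x \<otimes>\<^bsub>H\<^esub> pres_lift H f y"
    using assms uv by (simp add: pres_lift_pcls mult_pres_group eval_word_append)
qed

section \<open>Free reduction of words in involutions\<close>

text \<open>Reduced words are the normal forms of \<open>W\<^sub>n\<close>: two words are equal in \<open>W\<^sub>n\<close> iff they
  have the same reduction.\<close>

fun cancel_cons :: "'a \<Rightarrow> 'a list \<Rightarrow> 'a list" where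
  "cancel_cons a [] = [a]"
| "cancel_cons a (b # v) = (if a = b then v else a # b # v)"

fun reduce :: "'a list \<Rightarrow> 'a list" where
  "reduce [] = []"
| "reduce (a # w) = cancel_cons a (reduce w)"

fun reduced :: "'a list \<Rightarrow> bool" where
  "reduced [] = True"
| "reduced [a] = True"
| "reduced (a # b # w) = (a \<noteq> b \<and> reduced (b # w))"

lemma reduced_Cons: "reduced (a # w) \<longleftrightarrow> reduced w \<and> (w \<noteq> [] \<longrightarrow> a \<noteq> hd w)"
  by (cases w) auto

lemma reduced_append:
  "reduced (u @ v) \<longleftrightarrow> reduced u \<and> reduced v \<and> (u \<noteq> [] \<longrightarrow> v \<noteq> [] \<longrightarrow> last u \<noteq> hd v)"
  by (induction u) (auto simp: reduced_Cons)

lemma reduced_cancel_cons: "reduced w \<Longrightarrow> reduced (cancel_cons a w)"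
  by (cases w rule: reduced.cases) auto

lemma reduced_reduce: "reduced (reduce w)"
  by (induction w) (auto intro: reduced_cancel_cons)

lemma reduce_reduced: "reduced w \<Longrightarrow> reduce w = w"
  by (induction w rule: reduced.induct) auto

lemma reduce_idem [simp]: "reduce (reduce w) = reduce w"
  by (simp add: reduce_reduced reduced_reduce)

lemma cancel_cons_cancel_cons: "reduced w \<Longrightarrow> cancel_cons a (cancel_cons a w) = w"
  by (cases w rule: reduced.cases) auto

lemma reduce_append_reduce_right: "reduce (u @ reduce v) = reduce (u @ v)"
  by (induction u) auto

lemma reduce_append_reduce_left: "reduce (reduce u @ v) = reduce (u @ v)"
proof (induction u)
  case (Cons a u)
  have "reduce (cancel_cons a x @ v) = cancel_cons a (reduce (x @ v))" for x
    by (cases x) (auto simp: cancel_cons_cancel_cons reduced_reduce reduced_cancel_cons)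
  thus ?case using Cons by simp
qed simp

lemma reduce_cancel_pair: "reduce (u @ [a, a] @ v) = reduce (u @ v)"
  by (metis reduce_append_reduce_right reduce.simps(2) cancel_cons_cancel_cons reduced_reduce
      append_Cons append_Nil)

lemma reduce_rev_append_cancel: "reduce (p @ rev u @ u @ q) = reduce (p @ q)"
proof (induction u arbitrary: p)
  case (Cons a u)
  have "reduce (p @ rev (a # u) @ (a # u) @ q) = reduce ((p @ rev u) @ [a, a] @ (u @ q))" by simp
  also have "\<dots> = reduce (p @ rev u @ u @ q)" by (simp only: reduce_cancel_pair) simp
  finally show ?case using Cons by simp
qed simp

lemma reduce_rev_append_cancel_reduced:
  assumes "reduced (x @ rev p)" "reduced (p @ y)" "x \<noteq> [] \<Longrightarrow> y \<noteq> [] \<Longrightarrow> last x \<noteq> hd y"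
  shows "reduce (x @ rev p @ p @ y) = x @ y"
  using assms by (simp add: reduce_rev_append_cancel reduce_reduced reduced_append)

lemma set_reduce: "set (reduce w) \<subseteq> set w"
proof -
  have "set (cancel_cons a x) \<subseteq> insert a (set x)" for a and x :: "'a list" by (cases x) auto
  thus ?thesis by (induction w) fastforce+
qed

lemma length_reduce: "length (reduce w) \<le> length w"
proof -
  have "length (cancel_cons a x) \<le> Suc (length x)" for a and x :: "'a list" by (cases x) auto
  thus ?thesis by (induction w) (fastforce intro: le_trans)+
qed

lemma reduce_append_eq_Nil:
  assumes "reduced u" "reduced v" "reduce (u @ v) = []"
  shows "v = rev u"
  using assms
proof (induction u arbitrary: v rule: rev_induct)
  case Nil thus ?case by (simp add: reduce_reduced)
next
  case (snoc a u)
  have ru: "reduced u" using snoc.prems by (simp add: reduced_append)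
  have "reduce (u @ [a] @ v) = reduce (u @ reduce (a # v))"
    using reduce_append_reduce_right[of u "a # v"] by simp
  hence e: "reduce (u @ cancel_cons a v) = []" using snoc.prems by (simp add: reduce_reduced)
  show ?case
  proof (cases "v \<noteq> [] \<and> hd v = a")
    case True
    then obtain v' where v: "v = a # v'" by (cases v) auto
    have "v' = rev u"
      using snoc.IH[OF ru, of v'] snoc.prems e v by (simp add: reduced_Cons)
    thus ?thesis using v by simp
  next
    case False
    hence "cancel_cons a v = a # v" by (cases v) auto
    moreover have "reduced (a # v)" using snoc.prems False by (auto simp: reduced_Cons)
    ultimately have "a # v = rev u" using snoc.IH[OF ru, of "a # v"] e by simp
    hence "u = rev v @ [a]" by (metis rev.simps(2) rev_rev_ident)
    hence "\<not> reduced (u @ [a])" by (simp add: reduced_append)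
    thus ?thesis using snoc.prems by simp
  qed
qed

lemma reduced_palindrome:
  assumes "reduced w" "rev w = w" "w \<noteq> []"
  shows "\<exists>u a. w = u @ a # rev u"
proof -
  define k where "k = length w div 2"
  define u where "u = take k w"
  define v where "v = drop k w"
  have w: "w = u @ v" and lu: "length u = k" by (simp_all add: u_def v_def k_def)
  show ?thesis
  proof (cases "even (length w)")
    case True
    hence "length v = k" by (auto simp: v_def k_def)
    moreover have "rev v @ rev u = u @ v" using assms(2) w by simp
    ultimately have "rev v = u" using append_eq_append_conv[of "rev v" u "rev u" v] lu by auto
    hence "w = u @ rev u" "u \<noteq> []" using w assms(3) by auto
    hence "\<not> reduced w" by (simp add: reduced_append hd_rev)
    thus ?thesis using assms by simp
  next
    case False
    hence lv: "length v = Suc k" by (auto simp: v_def k_def elim!: oddE)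
    then obtain a v' where v: "v = a # v'" by (cases v) auto
    have "rev v' @ a # rev u = u @ a # v'" using assms(2) w v by simp
    hence "rev v' = u"
      using append_eq_append_conv[of "rev v'" u "a # rev u" "a # v'"] lu lv v by auto
    thus ?thesis using w v by (metis rev_rev_ident)
  qed
qed

lemma reduce_conj_palindrome:
  "reduce ((u @ a # rev u) @ (u @ a # w @ b # rev w @ a # rev u) @ (u @ a # rev u))
     = reduce (u @ w @ b # rev w @ rev u)"
proof -
  have "reduce ((u @ a # rev u) @ (u @ a # w @ b # rev w @ a # rev u) @ (u @ a # rev u))
      = reduce ((u @ [a]) @ rev u @ u @ (a # w @ b # rev w @ a # rev u @ u @ a # rev u))" by simp
  also have "\<dots> = reduce (u @ [a, a] @ (w @ b # rev w @ a # rev u @ u @ a # rev u))"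
    by (simp only: reduce_rev_append_cancel) simp
  also have "\<dots> = reduce ((u @ w @ b # rev w @ [a]) @ rev u @ u @ (a # rev u))"
    by (simp only: reduce_cancel_pair) simp
  also have "\<dots> = reduce ((u @ w @ b # rev w) @ [a, a] @ rev u)"
    by (simp only: reduce_rev_append_cancel) simp
  also have "\<dots> = reduce (u @ w @ b # rev w @ rev u)"
    by (simp only: reduce_cancel_pair) simp
  finally show ?thesis .
qed

lemma prefix_palindrome_decomp:
  assumes "prefix (u @ [a]) (v @ [b])" "u @ a # rev u \<noteq> v @ b # rev v"
  shows "\<exists>w. v @ b # rev v = u @ a # w @ b # rev w @ a # rev u"
proof -
  obtain x where x: "v @ [b] = u @ [a] @ x" using assms(1) by (auto elim: prefixE)
  have "x \<noteq> []" using x assms(2) by auto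
  then obtain w where "x = w @ [b]" using x by (cases x rule: rev_exhaust) auto
  hence "v = u @ a # w" using x by simp
  thus ?thesis by auto
qed

text \<open>When the halves \<open>U k @ [A k]\<close> are pairwise prefix-incomparable, cancellation in a
  product of the palindromes \<open>f k\<close> never reaches a middle letter: the last factor keeps its
  second half and each factor contributes at least one letter.\<close>

lemma reduce_concat_palindromes:
  assumes pal: "\<And>k. k \<in> D \<Longrightarrow> f k = U k @ A k # rev (U k)"
    and red: "\<And>k. k \<in> D \<Longrightarrow> reduced (f k)"
    and par: "\<And>i j. i \<in> D \<Longrightarrow> j \<in> D \<Longrightarrow> i \<noteq> j \<Longrightarrow> U i @ [A i] \<parallel> U j @ [A j]"
  shows "reduced w \<Longrightarrow> w \<noteq> [] \<Longrightarrow> set w \<subseteq> D \<Longrightarrow>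
    \<exists>Q. reduce (concat (map f w)) = Q @ rev (U (last w) @ [A (last w)]) \<and> length w \<le> length Q + 1"
proof (induction w rule: rev_induct)
  case (snoc j w)
  have j: "j \<in> D" and fj: "f j = U j @ rev (U j @ [A j])" using snoc.prems pal by auto
  show ?case
  proof (cases "w = []")
    case True
    thus ?thesis using fj reduce_reduced[OF red[OF j]] by (intro exI[of _ "U j"]) simp
  next
    case False
    define i where "i = last w"
    have i: "i \<in> D" and ij: "i \<noteq> j" and rw: "reduced w"
      using False snoc.prems by (auto simp: i_def reduced_append)
    obtain Q where Q: "reduce (concat (map f w)) = Q @ rev (U i @ [A i])" "length w \<le> length Q + 1"
      using snoc.IH[OF rw False] snoc.prems by (auto simp: i_def)
    obtain p b s d t where pb: "U i @ [A i] = p @ b # s" "U j @ [A j] = p @ d # t" "b \<noteq> d"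
      using parallel_decomp[OF par[OF i j ij]] by blast
    have "f j = (U j @ [A j]) @ rev (U j)" using pal[OF j] by simp
    hence fj': "f j = p @ d # t @ rev (U j)" unfolding pb(2) by simp
    have "reduce (concat (map f (w @ [j]))) = reduce (reduce (concat (map f w)) @ f j)"
      by (simp add: reduce_append_reduce_left)
    also have "\<dots> = reduce ((Q @ rev s @ [b]) @ rev p @ p @ (d # t @ rev (U j)))"
      using Q(1) pb(1) fj' by simp
    also have "\<dots> = (Q @ rev s @ [b]) @ (d # t @ rev (U j))"
    proof (rule reduce_rev_append_cancel_reduced)
      have "reduced (Q @ rev (U i @ [A i]))" using Q(1) reduced_reduce by metis
      thus "reduced ((Q @ rev s @ [b]) @ rev p)" unfolding pb(1) by simp
      show "reduced (p @ d # t @ rev (U j))" using red[OF j] fj' by simp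
    qed (use pb(3) in simp)
    also have "d # t @ rev (U j) = drop (length p) (U j) @ rev (U j @ [A j])"
    proof -
      have "length p \<le> length (U j)" using arg_cong[OF pb(2), of length] by simp
      hence "drop (length p) (f j) = drop (length p) (U j) @ rev (U j @ [A j])" using fj by simp
      thus ?thesis using fj' by simp
    qed
    finally show ?thesis using Q(2)
      by (intro exI[of _ "Q @ rev s @ [b] @ drop (length p) (U j)"]) simp
  qed
qed simp

abbreviation W_eq :: "nat \<Rightarrow> (nat list \<times> nat list) set" where
  "W_eq n \<equiv> pres_eq (W_gens n) (W_rels n)"

abbreviation W_cls :: "nat \<Rightarrow> nat list \<Rightarrow> nat list set" where
  "W_cls n w \<equiv> pcls (W_gens n) (W_rels n) w"

abbreviation AutW :: "nat \<Rightarrow> (nat list set \<Rightarrow> nat list set) monoid" where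
  "AutW n \<equiv> AutoGroup (W n)"

lemma W_gens_iff: "k \<in> W_gens n \<longleftrightarrow> 1 \<le> k \<and> k \<le> n"
  by (simp add: W_gens_def)

lemma finite_W_gens: "finite (W_gens n)"
  by (simp add: W_gens_def)

lemma W_eq_imp_reduce_eq: "(u, v) \<in> W_eq n \<Longrightarrow> reduce u = reduce v"
proof (induction rule: pres_eq.induct)
  case (rel u v r) thus ?case using reduce_cancel_pair[of u _ v] by (auto simp: W_rels_def)
qed auto

lemma W_eq_reduce: "set w \<subseteq> W_gens n \<Longrightarrow> (w, reduce w) \<in> W_eq n"
proof (induction w)
  case Nil thus ?case by (auto intro: pres_eq.refl)
next
  case (Cons a w)
  hence aw: "(a # w, a # reduce w) \<in> W_eq n"
    using pres_eq_context[of w "reduce w" "W_gens n" "W_rels n" "[a]" "[]"] by simp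
  have "set (reduce w) \<subseteq> W_gens n" using Cons set_reduce by fastforce
  hence "(a # a # y, y) \<in> W_eq n" if "reduce w = a # y" for y
    using pres_eq.rel[of "[]" "W_gens n" y "[a, a]" "W_rels n"] that Cons.prems
    by (auto simp: W_rels_def W_gens_def)
  thus ?case using aw by (cases "reduce w") (auto intro: pres_eq.trans)
qed

lemma W_eq_iff_reduce:
  "set u \<subseteq> W_gens n \<Longrightarrow> set v \<subseteq> W_gens n \<Longrightarrow> (u, v) \<in> W_eq n \<longleftrightarrow> reduce u = reduce v"
  by (metis W_eq_imp_reduce_eq W_eq_reduce pres_eq.sym pres_eq.trans)

lemma W_cls_eq_iff:
  "set u \<subseteq> W_gens n \<Longrightarrow> set v \<subseteq> W_gens n \<Longrightarrow> W_cls n u = W_cls n v \<longleftrightarrow> reduce u = reduce v"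
  by (simp add: pcls_eq_iff W_eq_iff_reduce)

lemma carrier_W: "carrier (W n) = carrier (pres_group (W_gens n) (W_rels n))"
  by (simp add: W_def)

lemma group_W: "group (W n)"
  unfolding W_def by (rule group_pres_group) (auto simp: W_rels_def W_gens_def)

lemma group_AutW: "group (AutW n)"
  by (rule group.AutoGroup[OF group_W])

lemma W_cls_in_carrier: "set w \<subseteq> W_gens n \<Longrightarrow> W_cls n w \<in> carrier (W n)"
  by (simp add: carrier_W pcls_in_carrier)

lemma carrier_WE:
  assumes "A \<in> carrier (W n)"
  obtains w where "set w \<subseteq> W_gens n" "A = W_cls n w"
  using assms by (auto simp: carrier_W elim: carrier_pres_groupE)

lemma mult_W:
  "set u \<subseteq> W_gens n \<Longrightarrow> set v \<subseteq> W_gens n \<Longrightarrow> W_cls n u \<otimes>\<^bsub>W n\<^esub> W_cls n v = W_cls n (u @ v)"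
  by (simp add: W_def mult_pres_group)

lemma one_W: "\<one>\<^bsub>W n\<^esub> = W_cls n []"
  by (simp add: W_def one_pres_group)

lemma carrier_AutoGroup: "carrier (AutoGroup H) = auto H"
  by (simp add: AutoGroup_def BijGroup_def)

lemma mult_AutoGroup:
  "x \<in> auto H \<Longrightarrow> y \<in> auto H \<Longrightarrow> x \<otimes>\<^bsub>AutoGroup H\<^esub> y = compose (carrier H) x y"
  by (simp add: AutoGroup_def BijGroup_def auto_def)

lemma one_AutoGroup: "\<one>\<^bsub>AutoGroup H\<^esub> = (\<lambda>x\<in>carrier H. x)"
  by (simp add: AutoGroup_def BijGroup_def)

definition involutive_subst :: "nat \<Rightarrow> (nat \<Rightarrow> nat list) \<Rightarrow> bool" where
  "involutive_subst n f \<longleftrightarrow> (\<forall>k\<in>W_gens n. set (f k) \<subseteq> W_gens n \<and> reduce (f k @ f k) = [])"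

definition subst_comp :: "(nat \<Rightarrow> nat list) \<Rightarrow> (nat \<Rightarrow> nat list) \<Rightarrow> nat \<Rightarrow> nat list" where
  "subst_comp f g = (\<lambda>k. concat (map f (g k)))"

lemma involutive_subst_set:
  "involutive_subst n f \<Longrightarrow> set w \<subseteq> W_gens n \<Longrightarrow> set (concat (map f w)) \<subseteq> W_gens n"
  by (auto simp: involutive_subst_def)

lemma W_eq_concat_map:
  assumes "involutive_subst n f"
  shows "(u, v) \<in> W_eq n \<Longrightarrow> (concat (map f u), concat (map f v)) \<in> W_eq n"
proof (induction rule: pres_eq.induct)
  case (refl w) thus ?case using involutive_subst_set[OF assms, of w] by (intro pres_eq.refl)
next
  case (sym u v) show ?case by (rule pres_eq.sym[OF sym.IH])
next
  case (trans u v w) show ?case by (rule pres_eq.trans[OF trans.IH])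
next
  case (rel u v r)
  then obtain k where k: "k \<in> W_gens n" "r = [k, k]" by (auto simp: W_rels_def W_gens_def)
  have "(f k @ f k, []) \<in> W_eq n" using assms k by (simp add: involutive_subst_def W_eq_iff_reduce)
  moreover have "(concat (map f u), concat (map f u)) \<in> W_eq n" "(concat (map f v), concat (map f v)) \<in> W_eq n"
    using rel.hyps(1,2) involutive_subst_set[OF assms] by (blast intro: pres_eq.refl)+
  ultimately have "(concat (map f u) @ (f k @ f k) @ concat (map f v),
                    concat (map f u) @ [] @ concat (map f v)) \<in> W_eq n"
    by (intro pres_eq_append)
  thus ?case using k by simp
qed

lemma W_eq_concat_map_pointwise:
  "\<forall>k\<in>set w. (f k, g k) \<in> W_eq n \<Longrightarrow> (concat (map f w), concat (map g w)) \<in> W_eq n"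
  by (induction w) (auto intro: pres_eq_append pres_eq.refl)

lemma W_subst_W_cls:
  assumes "involutive_subst n f" "set w \<subseteq> W_gens n"
  shows "W_subst n f (W_cls n w) = W_cls n (concat (map f w))"
proof -
  have "W_cls n (concat (map f w')) = W_cls n (concat (map f w))" if "w' \<in> W_cls n w" for w'
  proof -
    have "(concat (map f w), concat (map f w')) \<in> W_eq n"
      using that W_eq_concat_map[OF assms(1)] by (simp add: mem_pcls_iff)
    thus ?thesis using pcls_eq_iff involutive_subst_set[OF assms] by metis
  qed
  hence "{W_cls n (concat (map f w')) | w'. w' \<in> W_cls n w} = {W_cls n (concat (map f w))}"
    using pcls_refl[OF assms(2)] by blast
  thus ?thesis using W_cls_in_carrier[OF assms(2)] by (simp add: W_subst_def)
qed

lemma W_subst_closed: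
  assumes "involutive_subst n f" "A \<in> carrier (W n)"
  shows "W_subst n f A \<in> carrier (W n)"
proof -
  obtain w where w: "set w \<subseteq> W_gens n" "A = W_cls n w" using assms(2) by (auto elim: carrier_WE)
  thus ?thesis
    using assms(1) W_cls_in_carrier[OF involutive_subst_set[OF assms(1) w(1)]] by (simp add: W_subst_W_cls)
qed

lemma W_subst_hom: "involutive_subst n f \<Longrightarrow> W_subst n f \<in> hom (W n) (W n)"
proof (rule homI)
  fix x y assume f: "involutive_subst n f" and "x \<in> carrier (W n)" "y \<in> carrier (W n)"
  then obtain u v where "set u \<subseteq> W_gens n" "x = W_cls n u" "set v \<subseteq> W_gens n" "y = W_cls n v"
    by (auto elim!: carrier_WE)
  thus "W_subst n f (x \<otimes>\<^bsub>W n\<^esub> y) = W_subst n f x \<otimes>\<^bsub>W n\<^esub> W_subst n f y"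
    using f involutive_subst_set[OF f, of u] involutive_subst_set[OF f, of v]
    by (simp add: mult_W W_subst_W_cls)
qed (rule W_subst_closed)

lemma W_subst_extensional: "W_subst n f \<in> extensional (carrier (W n))"
  by (simp add: W_subst_def)

lemma W_subst_restrict:
  assumes "\<forall>k\<in>W_gens n. f k = g k"
  shows "W_subst n f = W_subst n g"
proof -
  have "concat (map f w) = concat (map g w)" if "A \<in> carrier (W n)" "w \<in> A" for A w
  proof -
    have "set w \<subseteq> W_gens n" using that carrier_pres_group_lists by (fastforce simp: carrier_W)
    thus ?thesis using assms by (metis (mono_tags, lifting) map_eq_conv subsetD)
  qed
  thus ?thesis unfolding W_subst_def by (intro restrict_ext) (metis (no_types, lifting))
qed

lemma W_subst_cong:
  assumes "involutive_subst n f" "\<forall>k\<in>W_gens n. set (g k) \<subseteq> W_gens n \<and> reduce (f k) = reduce (g k)"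
  shows "W_subst n f = W_subst n g" "involutive_subst n g"
proof -
  have e: "\<forall>k\<in>W_gens n. (f k, g k) \<in> W_eq n"
    using assms by (auto simp: involutive_subst_def W_eq_iff_reduce)
  show g: "involutive_subst n g" unfolding involutive_subst_def
  proof
    fix k assume k: "k \<in> W_gens n"
    have "(g k @ g k, f k @ f k) \<in> W_eq n" using e k by (auto intro: pres_eq_append pres_eq.sym)
    thus "set (g k) \<subseteq> W_gens n \<and> reduce (g k @ g k) = []"
      using assms k by (auto simp: involutive_subst_def dest: W_eq_imp_reduce_eq)
  qed
  show "W_subst n f = W_subst n g"
  proof (rule extensionalityI[OF W_subst_extensional W_subst_extensional])
    fix A assume "A \<in> carrier (W n)"
    then obtain w where w: "set w \<subseteq> W_gens n" "A = W_cls n w" by (auto elim!: carrier_WE)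
    have "(concat (map f w), concat (map g w)) \<in> W_eq n"
      using e w by (intro W_eq_concat_map_pointwise) auto
    thus "W_subst n f A = W_subst n g A"
      using w assms(1) g involutive_subst_set[OF assms(1) w(1)] by (simp add: W_subst_W_cls pcls_eq_iff)
  qed
qed

lemma involutive_subst_comp:
  assumes "involutive_subst n f" "involutive_subst n g"
  shows "involutive_subst n (subst_comp f g)"
  unfolding involutive_subst_def
proof
  fix k assume k: "k \<in> W_gens n"
  have s: "set (subst_comp f g k) \<subseteq> W_gens n"
    using assms k involutive_subst_set by (auto simp: involutive_subst_def subst_comp_def)
  have "(g k @ g k, []) \<in> W_eq n" using assms(2) k by (simp add: involutive_subst_def W_eq_iff_reduce)
  hence "(concat (map f (g k @ g k)), []) \<in> W_eq n" using W_eq_concat_map[OF assms(1)] by fastforce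
  thus "set (subst_comp f g k) \<subseteq> W_gens n \<and> reduce (subst_comp f g k @ subst_comp f g k) = []"
    using s by (auto simp: subst_comp_def dest: W_eq_imp_reduce_eq)
qed

lemma W_subst_compose:
  assumes "involutive_subst n f" "involutive_subst n g"
  shows "compose (carrier (W n)) (W_subst n f) (W_subst n g) = W_subst n (subst_comp f g)"
proof (rule extensionalityI[OF compose_extensional W_subst_extensional])
  fix A assume "A \<in> carrier (W n)"
  then obtain w where w: "set w \<subseteq> W_gens n" "A = W_cls n w" by (auto elim!: carrier_WE)
  have "concat (map f (concat (map g w))) = concat (map (subst_comp f g) w)"
    by (induction w) (auto simp: subst_comp_def)
  thus "compose (carrier (W n)) (W_subst n f) (W_subst n g) A = W_subst n (subst_comp f g) A"
    using w assms involutive_subst_comp[OF assms] W_cls_in_carrier involutive_subst_set[OF assms(2) w(1)]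
    by (simp add: compose_def W_subst_W_cls)
qed

lemma W_subst_id: "W_subst n (\<lambda>k. [k]) = (\<lambda>A\<in>carrier (W n). A)"
proof (rule extensionalityI[OF W_subst_extensional])
  fix A assume "A \<in> carrier (W n)"
  then obtain w where w: "set w \<subseteq> W_gens n" "A = W_cls n w" by (auto elim!: carrier_WE)
  have "involutive_subst n (\<lambda>k. [k])" by (auto simp: involutive_subst_def)
  moreover have "concat (map (\<lambda>k. [k]) w) = w" by (induction w) auto
  ultimately show "W_subst n (\<lambda>k. [k]) A = (\<lambda>A\<in>carrier (W n). A) A"
    using w W_cls_in_carrier by (simp add: W_subst_W_cls)
qed simp

lemma one_AutW: "\<one>\<^bsub>AutW n\<^esub> = W_subst n (\<lambda>k. [k])"
  by (simp add: one_AutoGroup W_subst_id)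

lemma W_subst_auto:
  assumes "involutive_subst n f" "\<forall>k\<in>W_gens n. reduce (subst_comp f f k) = [k]"
  shows "W_subst n f \<in> auto (W n)"
proof -
  have "W_subst n (subst_comp f f) = W_subst n (\<lambda>k. [k])"
    using W_subst_cong(1)[OF involutive_subst_comp[OF assms(1) assms(1)], of "\<lambda>k. [k]"] assms
    by (auto simp: reduce_reduced)
  hence c: "compose (carrier (W n)) (W_subst n f) (W_subst n f) = (\<lambda>A\<in>carrier (W n). A)"
    by (simp add: W_subst_compose assms W_subst_id)
  have "W_subst n f (W_subst n f A) = A" if "A \<in> carrier (W n)" for A
    using fun_cong[OF c, of A] that by (simp add: compose_def)
  hence "bij_betw (W_subst n f) (carrier (W n)) (carrier (W n))"
    using W_subst_closed[OF assms(1)] by (intro bij_betw_byWitness[where f' = "W_subst n f"]) auto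
  thus ?thesis using W_subst_hom[OF assms(1)] W_subst_extensional by (simp add: auto_def Bij_def)
qed

lemma mult_AutW_W_subst:
  assumes "involutive_subst n f" "involutive_subst n g" "W_subst n f \<in> auto (W n)" "W_subst n g \<in> auto (W n)"
  shows "W_subst n f \<otimes>\<^bsub>AutW n\<^esub> W_subst n g = W_subst n (subst_comp f g)"
  using assms by (simp add: mult_AutoGroup W_subst_compose)

lemma AutW_m_closed: "x \<in> auto (W n) \<Longrightarrow> y \<in> auto (W n) \<Longrightarrow> x \<otimes>\<^bsub>AutW n\<^esub> y \<in> auto (W n)"
  using monoid.m_closed[OF group.is_monoid[OF group_AutW]] by (metis carrier_AutoGroup)

definition sigma_subst :: "nat \<Rightarrow> nat \<Rightarrow> nat \<Rightarrow> nat list" where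
  "sigma_subst a b = (\<lambda>k. if k = b then [a, b, a] else [k])"

definition alpha_subst :: "(nat \<Rightarrow> nat) \<Rightarrow> nat \<Rightarrow> nat list" where
  "alpha_subst p = (\<lambda>k. [p k])"

lemma sigma_eq_W_subst: "sigma n a b = W_subst n (sigma_subst a b)"
  by (simp add: sigma_def sigma_subst_def)

lemma alpha_eq_W_subst: "alpha n p = W_subst n (alpha_subst p)"
  by (simp add: alpha_def alpha_subst_def)

lemma involutive_sigma_subst:
  "a \<in> W_gens n \<Longrightarrow> b \<in> W_gens n \<Longrightarrow> involutive_subst n (sigma_subst a b)"
  by (auto simp: involutive_subst_def sigma_subst_def)

lemma involutive_alpha_subst:
  "\<forall>k\<in>W_gens n. p k \<in> W_gens n \<Longrightarrow> involutive_subst n (alpha_subst p)"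
  by (auto simp: involutive_subst_def alpha_subst_def)

lemma transpose_in_W_gens:
  "c \<in> W_gens n \<Longrightarrow> d \<in> W_gens n \<Longrightarrow> k \<in> W_gens n \<Longrightarrow> transpose c d k \<in> W_gens n"
  by (auto simp: transpose_def)

lemma sigma_auto: "a \<in> W_gens n \<Longrightarrow> b \<in> W_gens n \<Longrightarrow> a \<noteq> b \<Longrightarrow> sigma n a b \<in> auto (W n)"
  unfolding sigma_eq_W_subst
  by (rule W_subst_auto[OF involutive_sigma_subst]) (auto simp: subst_comp_def sigma_subst_def)

lemma alpha_transpose_auto:
  "c \<in> W_gens n \<Longrightarrow> d \<in> W_gens n \<Longrightarrow> alpha n (transpose c d) \<in> auto (W n)"
  unfolding alpha_eq_W_subst
  by (rule W_subst_auto[OF involutive_alpha_subst])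
    (auto simp: subst_comp_def alpha_subst_def transpose_in_W_gens)

lemma alpha_id: "alpha n id = \<one>\<^bsub>AutW n\<^esub>"
  by (simp add: alpha_eq_W_subst one_AutW alpha_subst_def)

lemma alpha_mult:
  assumes "\<forall>k\<in>W_gens n. p k \<in> W_gens n" "\<forall>k\<in>W_gens n. q k \<in> W_gens n"
    and "alpha n p \<in> auto (W n)" "alpha n q \<in> auto (W n)"
  shows "alpha n p \<otimes>\<^bsub>AutW n\<^esub> alpha n q = alpha n (p \<circ> q)"
proof -
  have "subst_comp (alpha_subst p) (alpha_subst q) = alpha_subst (p \<circ> q)"
    by (auto simp: subst_comp_def alpha_subst_def)
  thus ?thesis
    using assms unfolding alpha_eq_W_subst by (simp add: mult_AutW_W_subst involutive_alpha_subst)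
qed

lemma sigma_square:
  assumes "a \<in> W_gens n" "b \<in> W_gens n" "a \<noteq> b"
  shows "sigma n a b \<otimes>\<^bsub>AutW n\<^esub> sigma n a b = \<one>\<^bsub>AutW n\<^esub>"
proof -
  have s: "involutive_subst n (sigma_subst a b)" using assms by (simp add: involutive_sigma_subst)
  have "W_subst n (subst_comp (sigma_subst a b) (sigma_subst a b)) = W_subst n (\<lambda>k. [k])"
    by (rule W_subst_cong(1)[OF involutive_subst_comp[OF s s]])
      (use assms in \<open>auto simp: subst_comp_def sigma_subst_def\<close>)
  thus ?thesis
    using mult_AutW_W_subst[OF s s] sigma_auto[OF assms] by (simp add: sigma_eq_W_subst one_AutW)
qed

lemma alpha_transpose_square:
  assumes "c \<in> W_gens n" "d \<in> W_gens n"
  shows "alpha n (transpose c d) \<otimes>\<^bsub>AutW n\<^esub> alpha n (transpose c d) = \<one>\<^bsub>AutW n\<^esub>"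
proof -
  have "\<forall>k\<in>W_gens n. transpose c d k \<in> W_gens n" using assms transpose_in_W_gens by blast
  thus ?thesis
    using alpha_mult alpha_transpose_auto[OF assms] alpha_id by (simp add: transpose_comp_involutory)
qed

lemma sigma_conj_alpha_transpose:
  assumes "c \<in> W_gens n" "d \<in> W_gens n" "a \<in> W_gens n" "b \<in> W_gens n" "a \<noteq> b"
  shows "alpha n (transpose c d) \<otimes>\<^bsub>AutW n\<^esub> sigma n a b \<otimes>\<^bsub>AutW n\<^esub> alpha n (transpose c d)
         = sigma n (transpose c d a) (transpose c d b)"
proof -
  let ?t = "alpha_subst (transpose c d)" and ?s = "sigma_subst a b"
  have it: "involutive_subst n ?t" using assms by (simp add: involutive_alpha_subst transpose_in_W_gens)
  have iS: "involutive_subst n ?s" using assms by (simp add: involutive_sigma_subst)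
  have at: "W_subst n ?t \<in> auto (W n)" using alpha_transpose_auto[OF assms(1,2)] by (simp add: alpha_eq_W_subst)
  have as: "W_subst n ?s \<in> auto (W n)" using sigma_auto[OF assms(3-5)] by (simp add: sigma_eq_W_subst)
  have m1: "W_subst n ?t \<otimes>\<^bsub>AutW n\<^esub> W_subst n ?s = W_subst n (subst_comp ?t ?s)"
    by (rule mult_AutW_W_subst[OF it iS at as])
  have "W_subst n (subst_comp ?t ?s) \<otimes>\<^bsub>AutW n\<^esub> W_subst n ?t = W_subst n (subst_comp (subst_comp ?t ?s) ?t)"
    by (rule mult_AutW_W_subst[OF involutive_subst_comp[OF it iS] it _ at])
      (use m1 AutW_m_closed[OF at as] in simp)
  moreover have "subst_comp (subst_comp ?t ?s) ?t = sigma_subst (transpose c d a) (transpose c d b)"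
    by (auto simp: subst_comp_def alpha_subst_def sigma_subst_def transpose_def fun_eq_iff)
  ultimately show ?thesis using m1 by (simp add: alpha_eq_W_subst sigma_eq_W_subst)
qed

section \<open>Automorphisms of \<open>W\<^sub>n\<close>\<close>

lemma hom_W_W_cls:
  assumes "\<phi> \<in> hom (W n) (W n)"
    and "\<And>k. k \<in> W_gens n \<Longrightarrow> \<phi> (W_cls n [k]) = W_cls n (f k) \<and> set (f k) \<subseteq> W_gens n"
  shows "set w \<subseteq> W_gens n \<Longrightarrow> \<phi> (W_cls n w) = W_cls n (concat (map f w))"
proof (induction w)
  case Nil
  have "group_hom (W n) (W n) \<phi>" using assms(1) group_W by (simp add: group_hom_def group_hom_axioms_def)
  thus ?case using group_hom.hom_one by (fastforce simp: one_W)
next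
  case (Cons a w)
  hence a: "a \<in> W_gens n" "set w \<subseteq> W_gens n" by auto
  have "\<phi> (W_cls n (a # w)) = \<phi> (W_cls n [a] \<otimes>\<^bsub>W n\<^esub> W_cls n w)" using a by (simp add: mult_W)
  also have "\<dots> = \<phi> (W_cls n [a]) \<otimes>\<^bsub>W n\<^esub> \<phi> (W_cls n w)"
    using assms(1) a W_cls_in_carrier[of "[a]" n] W_cls_in_carrier[of w n] by (simp add: hom_mult)
  also have "\<dots> = W_cls n (f a @ concat (map f w))"
  proof -
    have "set (concat (map f w)) \<subseteq> W_gens n" using assms(2) a(2) by fastforce
    thus ?thesis using assms(2)[OF a(1)] a Cons.IH by (simp add: mult_W)
  qed
  finally show ?case by simp
qed

lemma auto_W_eq_W_subst:
  assumes "\<phi> \<in> auto (W n)"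
  shows "\<exists>f. involutive_subst n f \<and> (\<forall>k\<in>W_gens n. reduced (f k)) \<and> \<phi> = W_subst n f"
proof -
  have hom: "\<phi> \<in> hom (W n) (W n)" and ext: "\<phi> \<in> extensional (carrier (W n))"
    using assms by (auto simp: auto_def Bij_def)
  have "\<exists>w. set w \<subseteq> W_gens n \<and> \<phi> (W_cls n [k]) = W_cls n w" if "k \<in> W_gens n" for k
  proof -
    have "\<phi> (W_cls n [k]) \<in> carrier (W n)" using hom W_cls_in_carrier[of "[k]" n] that by (auto simp: hom_def)
    thus ?thesis by (auto elim!: carrier_WE)
  qed
  then obtain g where g: "\<And>k. k \<in> W_gens n \<Longrightarrow> set (g k) \<subseteq> W_gens n \<and> \<phi> (W_cls n [k]) = W_cls n (g k)"
    by metis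
  define f where "f k = reduce (g k)" for k
  have fk: "\<phi> (W_cls n [k]) = W_cls n (f k) \<and> set (f k) \<subseteq> W_gens n" if "k \<in> W_gens n" for k
    using g[OF that] set_reduce[of "g k"] W_cls_eq_iff[of "g k" n "f k"] by (auto simp: f_def)
  have cls: "\<phi> (W_cls n w) = W_cls n (concat (map f w))" if "set w \<subseteq> W_gens n" for w
    using hom_W_W_cls[OF hom fk that] .
  have inv: "involutive_subst n f" unfolding involutive_subst_def
  proof
    fix k assume k: "k \<in> W_gens n"
    have "W_cls n [k, k] = W_cls n []" using k by (subst W_cls_eq_iff) auto
    hence "W_cls n (f k @ f k) = W_cls n []" using cls[of "[k, k]"] cls[of "[]"] k by simp
    thus "set (f k) \<subseteq> W_gens n \<and> reduce (f k @ f k) = []" using fk[OF k] by (subst (asm) W_cls_eq_iff) auto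
  qed
  have "\<phi> = W_subst n f"
  proof (rule extensionalityI[OF ext W_subst_extensional])
    fix A assume "A \<in> carrier (W n)"
    then obtain w where "set w \<subseteq> W_gens n" "A = W_cls n w" by (auto elim: carrier_WE)
    thus "\<phi> A = W_subst n f A" using cls inv by (simp add: W_subst_W_cls)
  qed
  thus ?thesis using inv by (auto simp: f_def reduced_reduce)
qed

lemma auto_W_subst_images:
  assumes f: "involutive_subst n f" "\<forall>k\<in>W_gens n. reduced (f k)" and aut: "W_subst n f \<in> auto (W n)"
  shows "inj_on f (W_gens n)" and "k \<in> W_gens n \<Longrightarrow> \<exists>u a. f k = u @ a # rev u"
proof -
  have inj: "inj_on (W_subst n f) (carrier (W n))" using aut by (simp add: auto_def Bij_def bij_betw_def)
  have cls: "W_subst n f (W_cls n w) = W_cls n (concat (map f w))" if "set w \<subseteq> W_gens n" for w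
    using W_subst_W_cls[OF f(1) that] .
  have cls_eq: "w = w'" if "set w \<subseteq> W_gens n" "set w' \<subseteq> W_gens n" "reduced w" "reduced w'"
    "concat (map f w) = concat (map f w')" for w w'
  proof -
    have "W_cls n w = W_cls n w'"
      using inj_onD[OF inj _ W_cls_in_carrier W_cls_in_carrier] cls that by metis
    thus ?thesis using that by (simp add: W_cls_eq_iff reduce_reduced)
  qed
  show "inj_on f (W_gens n)" by (rule inj_onI) (use cls_eq[of "[_]" "[_]"] in auto)
  assume k: "k \<in> W_gens n"
  have "f k \<noteq> []" using cls_eq[of "[k]" "[]"] k by auto
  moreover have "f k = rev (f k)"
    using f k reduce_append_eq_Nil[of "f k" "f k"] by (simp add: involutive_subst_def)
  ultimately show "\<exists>u a. f k = u @ a # rev u" using reduced_palindrome f(2) k by metis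
qed

lemma W_subst_eq_alpha:
  assumes "\<forall>k\<in>W_gens n. \<exists>i\<in>W_gens n. f i = [k]"
  shows "\<exists>\<pi>. \<pi> permutes W_gens n \<and> W_subst n f = alpha n \<pi>"
proof -
  define g where "g k = (SOME i. i \<in> W_gens n \<and> f i = [k])" for k
  have g: "g k \<in> W_gens n \<and> f (g k) = [k]" if "k \<in> W_gens n" for k
    unfolding g_def by (rule someI_ex) (use assms that in blast)
  have "inj_on g (W_gens n)"
  proof (rule inj_onI)
    fix x y assume "x \<in> W_gens n" "y \<in> W_gens n" "g x = g y"
    hence "[x] = [y]" using g by metis
    thus "x = y" by simp
  qed
  moreover have "g ` W_gens n \<subseteq> W_gens n" using g by blast
  ultimately have g_onto: "g ` W_gens n = W_gens n" using endo_inj_surj[OF finite_W_gens] by blast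
  define \<pi> where "\<pi> i = (if i \<in> W_gens n then hd (f i) else i)" for i
  have f\<pi>: "f i = [\<pi> i] \<and> \<pi> i \<in> W_gens n" if "i \<in> W_gens n" for i
  proof -
    have "i \<in> g ` W_gens n" using that g_onto by simp
    then obtain k where "k \<in> W_gens n" "i = g k" by blast
    thus ?thesis using g by (simp add: \<pi>_def)
  qed
  have "\<pi> (g k) = k" if "k \<in> W_gens n" for k using f\<pi>[of "g k"] g[OF that] by simp
  hence "W_gens n \<subseteq> \<pi> ` W_gens n" using g by (metis image_eqI subsetI)
  moreover have "\<pi> ` W_gens n \<subseteq> W_gens n" using f\<pi> by blast
  ultimately have "\<pi> ` W_gens n = W_gens n" by blast
  hence "bij_betw \<pi> (W_gens n) (W_gens n)"
    using finite_surj_inj[OF finite_W_gens] by (simp add: bij_betw_def)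
  hence "\<pi> permutes W_gens n" by (rule bij_imp_permutes) (simp add: \<pi>_def)
  moreover have "W_subst n f = alpha n \<pi>"
    unfolding alpha_eq_W_subst by (rule W_subst_restrict) (simp add: f\<pi> alpha_subst_def)
  ultimately show ?thesis by blast
qed

lemma auto_W_subst_parallel_eq_alpha:
  assumes f: "involutive_subst n f" "\<forall>k\<in>W_gens n. reduced (f k)" and aut: "W_subst n f \<in> auto (W n)"
    and pal: "\<And>k. k \<in> W_gens n \<Longrightarrow> f k = U k @ A k # rev (U k)"
    and par: "\<And>i j. i \<in> W_gens n \<Longrightarrow> j \<in> W_gens n \<Longrightarrow> i \<noteq> j \<Longrightarrow> U i @ [A i] \<parallel> U j @ [A j]"
  shows "\<exists>\<pi>. \<pi> permutes W_gens n \<and> W_subst n f = alpha n \<pi>"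
proof (rule W_subst_eq_alpha, intro ballI)
  fix k assume k: "k \<in> W_gens n"
  have "W_cls n [k] \<in> W_subst n f ` carrier (W n)"
    using aut W_cls_in_carrier[of "[k]" n] k by (simp add: auto_def Bij_def bij_betw_def)
  then obtain w0 where w0: "set w0 \<subseteq> W_gens n" "W_subst n f (W_cls n w0) = W_cls n [k]"
    by (auto elim!: carrier_WE)
  define w where "w = reduce w0"
  have w: "set w \<subseteq> W_gens n" "reduced w" "W_cls n w = W_cls n w0"
    using w0(1) set_reduce[of w0] by (auto simp: w_def reduced_reduce W_cls_eq_iff)
  have "W_cls n (concat (map f w)) = W_cls n [k]" using w w0(2) W_subst_W_cls[OF f(1) w(1)] by simp
  hence wk: "reduce (concat (map f w)) = [k]"
    using involutive_subst_set[OF f(1) w(1)] k by (subst (asm) W_cls_eq_iff) auto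
  hence "w \<noteq> []" by auto
  then obtain Q where Q: "reduce (concat (map f w)) = Q @ rev (U (last w) @ [A (last w)])"
      "length w \<le> length Q + 1"
    using reduce_concat_palindromes[where D = "W_gens n" and f = f, OF pal _ par w(2) \<open>w \<noteq> []\<close> w(1)] f(2)
    by blast
  have "length Q = 0" using arg_cong[OF Q(1), of length] wk by simp
  hence "length w = 1" using Q(2) \<open>w \<noteq> []\<close> by (cases w) auto
  then obtain i where "w = [i]" by (cases w) auto
  thus "\<exists>i\<in>W_gens n. f i = [k]" using wk w f(2) by (auto simp: reduce_reduced)
qed

text \<open>One step of Nielsen reduction: composing with the partial conjugation \<open>\<sigma>\<^sub>i\<^sub>j\<close>
  replaces the image of \<open>s\<^sub>j\<close> by the conjugate \<open>f i f j f i\<close>, which the common prefix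
  \<open>u a\<close> shortens.\<close>

lemma auto_W_subst_reduce_step:
  assumes f: "involutive_subst n f" "\<forall>k\<in>W_gens n. reduced (f k)" and aut: "W_subst n f \<in> auto (W n)"
    and ij: "i \<in> W_gens n" "j \<in> W_gens n" "i \<noteq> j"
    and fi: "f i = u @ a # rev u" and fj: "f j = u @ a # w @ b # rev w @ a # rev u"
  defines "g \<equiv> f(j := reduce (f i @ f j @ f i))"
  shows "involutive_subst n g" and "\<forall>k\<in>W_gens n. reduced (g k)"
    and "W_subst n f \<otimes>\<^bsub>AutW n\<^esub> sigma n i j = W_subst n g"
    and "(\<Sum>k\<in>W_gens n. length (g k)) < (\<Sum>k\<in>W_gens n. length (f k))"
proof -
  have s: "involutive_subst n (sigma_subst i j)" using ij by (simp add: involutive_sigma_subst)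
  have fs: "set (f k) \<subseteq> W_gens n" if "k \<in> W_gens n" for k using f(1) that by (simp add: involutive_subst_def)
  have "\<forall>k\<in>W_gens n. set (g k) \<subseteq> W_gens n \<and> reduce (subst_comp f (sigma_subst i j) k) = reduce (g k)"
  proof -
    have "set (reduce (f i @ f j @ f i)) \<subseteq> W_gens n"
      using fs[OF ij(1)] fs[OF ij(2)] set_reduce[of "f i @ f j @ f i"] by auto
    thus ?thesis using fs by (auto simp: g_def subst_comp_def sigma_subst_def reduce_reduced f(2))
  qed
  note cong = W_subst_cong[OF involutive_subst_comp[OF f(1) s] this]
  show "involutive_subst n g" by (rule cong(2))
  show "\<forall>k\<in>W_gens n. reduced (g k)" using f(2) by (simp add: g_def reduced_reduce)
  show "W_subst n f \<otimes>\<^bsub>AutW n\<^esub> sigma n i j = W_subst n g"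
    using mult_AutW_W_subst[OF f(1) s aut] sigma_auto[OF ij] cong(1) by (simp add: sigma_eq_W_subst)
  have "length (g j) \<le> length (u @ w @ b # rev w @ rev u)"
    using length_reduce[of "u @ w @ b # rev w @ rev u"]
    by (simp add: g_def fi fj reduce_conj_palindrome[of u a w b, simplified])
  also have "\<dots> < length (f j)" by (simp add: fj)
  finally have "length (g j) < length (f j)" .
  moreover have "(\<Sum>k\<in>W_gens n. length (h k)) = length (h j) + (\<Sum>k\<in>W_gens n - {j}. length (h k))" for h
    by (rule sum.remove[OF finite_W_gens ij(2)])
  moreover have "(\<Sum>k\<in>W_gens n - {j}. length (g k)) = (\<Sum>k\<in>W_gens n - {j}. length (f k))"
    by (rule sum.cong) (auto simp: g_def)
  ultimately show "(\<Sum>k\<in>W_gens n. length (g k)) < (\<Sum>k\<in>W_gens n. length (f k))"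
    by (metis add_less_mono1)
qed

lemma auto_W_subst_in_subgroup:
  assumes H: "subgroup H (AutW n)"
    and sigma_H: "\<And>a b. a \<in> W_gens n \<Longrightarrow> b \<in> W_gens n \<Longrightarrow> a \<noteq> b \<Longrightarrow> sigma n a b \<in> H"
    and alpha_H: "\<And>p. p permutes W_gens n \<Longrightarrow> alpha n p \<in> H"
  shows "involutive_subst n f \<Longrightarrow> \<forall>k\<in>W_gens n. reduced (f k) \<Longrightarrow> W_subst n f \<in> auto (W n)
    \<Longrightarrow> W_subst n f \<in> H"
proof (induction "\<Sum>k\<in>W_gens n. length (f k)" arbitrary: f rule: less_induct)
  case less
  define U where "U k = take (length (f k) div 2) (f k)" for k
  define A where "A k = f k ! (length (f k) div 2)" for k
  have pal: "f k = U k @ A k # rev (U k)" if "k \<in> W_gens n" for k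
    using auto_W_subst_images(2)[OF less.prems that] by (auto simp: U_def A_def nth_append)
  show ?case
  proof (cases "\<exists>i\<in>W_gens n. \<exists>j\<in>W_gens n. i \<noteq> j \<and> prefix (U i @ [A i]) (U j @ [A j])")
    case False
    have "U i @ [A i] \<parallel> U j @ [A j]" if "i \<in> W_gens n" "j \<in> W_gens n" "i \<noteq> j" for i j
    proof (rule parallelI)
      show "\<not> prefix (U i @ [A i]) (U j @ [A j])" using False that by meson
      show "\<not> prefix (U j @ [A j]) (U i @ [A i])" using False that(1,2) that(3)[symmetric] by meson
    qed
    from auto_W_subst_parallel_eq_alpha[OF less.prems pal this]
    obtain \<pi> where "\<pi> permutes W_gens n" "W_subst n f = alpha n \<pi>" by blast
    thus ?thesis using alpha_H by simp
  next
    case True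
    then obtain i j where ij: "i \<in> W_gens n" "j \<in> W_gens n" "i \<noteq> j"
      and pre: "prefix (U i @ [A i]) (U j @ [A j])"
      by blast
    have "f i \<noteq> f j" using inj_onD[OF auto_W_subst_images(1)[OF less.prems]] ij by blast
    then obtain w where "U j @ A j # rev (U j) = U i @ A i # w @ A j # rev w @ A i # rev (U i)"
      using prefix_palindrome_decomp[OF pre] pal[OF ij(1)] pal[OF ij(2)] by auto
    hence fj: "f j = U i @ A i # w @ A j # rev w @ A i # rev (U i)" using pal[OF ij(2)] by simp
    define g where "g = f(j := reduce (f i @ f j @ f i))"
    note step = auto_W_subst_reduce_step[OF less.prems ij pal[OF ij(1)] fj, folded g_def]
    have "W_subst n g \<in> auto (W n)"
      using step(3) AutW_m_closed[OF less.prems(3) sigma_auto[OF ij]] by simp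
    hence gH: "W_subst n g \<in> H" using less.hyps[OF step(4) step(1,2)] by blast
    have "W_subst n f = W_subst n f \<otimes>\<^bsub>AutW n\<^esub> (sigma n i j \<otimes>\<^bsub>AutW n\<^esub> sigma n i j)"
      using sigma_square[OF ij] less.prems(3) group.is_monoid[OF group_AutW]
      by (simp add: monoid.r_one carrier_AutoGroup)
    also have "\<dots> = W_subst n g \<otimes>\<^bsub>AutW n\<^esub> sigma n i j"
      using group.is_monoid[OF group_AutW] less.prems(3) sigma_auto[OF ij] step(3)
      by (simp add: monoid.m_assoc[symmetric] carrier_AutoGroup)
    finally show ?thesis using gH sigma_H[OF ij] subgroup.m_closed[OF H] by simp
  qed
qed

lemma alpha_conj_alpha_transpose:
  assumes "a \<in> W_gens n" "b \<in> W_gens n" "c \<in> W_gens n" "d \<in> W_gens n"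
  shows "alpha n (transpose c d) \<otimes>\<^bsub>AutW n\<^esub> alpha n (transpose a b) \<otimes>\<^bsub>AutW n\<^esub> alpha n (transpose c d)
         = alpha n (transpose c d \<circ> transpose a b \<circ> transpose c d)"
proof -
  have ab: "\<forall>k\<in>W_gens n. transpose a b k \<in> W_gens n" and cd: "\<forall>k\<in>W_gens n. transpose c d k \<in> W_gens n"
    using assms transpose_in_W_gens by auto
  have m: "alpha n (transpose c d) \<otimes>\<^bsub>AutW n\<^esub> alpha n (transpose a b) = alpha n (transpose c d \<circ> transpose a b)"
    using alpha_mult[OF cd ab] alpha_transpose_auto assms by blast
  have "alpha n (transpose c d \<circ> transpose a b) \<in> auto (W n)"
    unfolding m[symmetric] using AutW_m_closed alpha_transpose_auto assms by blast
  thus ?thesis using alpha_mult[of n "transpose c d \<circ> transpose a b" "transpose c d"] ab cd m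
      alpha_transpose_auto[OF assms(3,4)] by simp
qed

lemma alpha_transpose_in_subgroup:
  assumes H: "subgroup H (AutW n)"
    and adj: "\<And>i. 1 \<le> i \<Longrightarrow> i + 1 \<le> n \<Longrightarrow> alpha n (transpose i (i + 1)) \<in> H"
    and ab: "a \<in> W_gens n" "b \<in> W_gens n"
  shows "alpha n (transpose a b) \<in> H"
proof -
  have far: "alpha n (transpose a (a + Suc d)) \<in> H" if "1 \<le> a" "a + Suc d \<le> n" for a d
    using that
  proof (induction d)
    case 0 thus ?case using adj by simp
  next
    case (Suc d)
    let ?b = "a + Suc d"
    have "transpose a (Suc ?b) = transpose ?b (Suc ?b) \<circ> transpose a ?b \<circ> transpose ?b (Suc ?b)"
      by (auto simp: transpose_def fun_eq_iff)
    moreover have "a \<in> W_gens n" "?b \<in> W_gens n" "Suc ?b \<in> W_gens n" using Suc.prems by (auto simp: W_gens_iff)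
    ultimately have "alpha n (transpose a (Suc ?b)) =
        alpha n (transpose ?b (Suc ?b)) \<otimes>\<^bsub>AutW n\<^esub> alpha n (transpose a ?b) \<otimes>\<^bsub>AutW n\<^esub> alpha n (transpose ?b (Suc ?b))"
      using alpha_conj_alpha_transpose by presburger
    moreover have "alpha n (transpose ?b (Suc ?b)) \<in> H" using adj[of ?b] Suc.prems by simp
    ultimately show ?case using subgroup.m_closed[OF H] Suc by simp
  qed
  consider "a = b" | "a < b" | "b < a" by linarith
  thus ?thesis
  proof cases
    case 1
    thus ?thesis using alpha_id subgroup.one_closed[OF H] by simp
  next
    case 2
    then obtain d where "b = a + Suc d" using less_imp_Suc_add by fastforce
    thus ?thesis using far[of a d] ab by (simp add: W_gens_iff)
  next
    case 3
    then obtain d where "a = b + Suc d" using less_imp_Suc_add by fastforce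
    thus ?thesis using far[of b d] ab by (simp add: W_gens_iff transpose_commute)
  qed
qed

lemma alpha_permutes_in_subgroup:
  assumes H: "subgroup H (AutW n)"
    and transp: "\<And>a b. a \<in> W_gens n \<Longrightarrow> b \<in> W_gens n \<Longrightarrow> alpha n (transpose a b) \<in> H"
    and p: "p permutes W_gens n"
  shows "alpha n p \<in> H"
  using p finite_W_gens[of n]
proof (induction rule: permutes_induct)
  case id show ?case using alpha_id[of n] subgroup.one_closed[OF H] by (simp only:)
next
  case (swap a b p)
  have "\<forall>k\<in>W_gens n. p k \<in> W_gens n" using swap by (simp add: permutes_in_image)
  hence "alpha n (transpose a b) \<otimes>\<^bsub>AutW n\<^esub> alpha n p = alpha n (transpose a b \<circ> p)"
    using alpha_mult swap transpose_in_W_gens alpha_transpose_auto subgroup.subset[OF H]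
    by (auto simp: carrier_AutoGroup)
  thus ?case using subgroup.m_closed[OF H transp[OF swap(1,2)] swap.IH] by (simp only:)
qed

lemma sigma_in_subgroup:
  assumes H: "subgroup H (AutW n)" and "2 \<le> n" and sigma12: "sigma n 1 2 \<in> H"
    and transp: "\<And>a b. a \<in> W_gens n \<Longrightarrow> b \<in> W_gens n \<Longrightarrow> alpha n (transpose a b) \<in> H"
    and ab: "a \<in> W_gens n" "b \<in> W_gens n" "a \<noteq> b"
  shows "sigma n a b \<in> H"
proof -
  have gens: "1 \<in> W_gens n" "2 \<in> W_gens n" using \<open>2 \<le> n\<close> by (auto simp: W_gens_iff)
  have conj: "sigma n (transpose c d a') (transpose c d b') \<in> H"
    if "c \<in> W_gens n" "d \<in> W_gens n" "a' \<in> W_gens n" "b' \<in> W_gens n" "a' \<noteq> b'" "sigma n a' b' \<in> H"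
    for a' b' c d
    using sigma_conj_alpha_transpose[OF that(1-5)] subgroup.m_closed[OF H] transp that by metis
  have sigma1: "sigma n 1 b' \<in> H" if "b' \<in> W_gens n" "b' \<noteq> 1" for b'
    using conj[OF gens(2) that(1) gens _ sigma12] that by (simp add: transpose_def)
  show ?thesis
  proof (cases "a = 1")
    case True thus ?thesis using sigma1 ab by simp
  next
    case False
    let ?b = "transpose 1 a b"
    have b: "?b \<in> W_gens n" "?b \<noteq> 1"
      using transpose_in_W_gens[OF gens(1) ab(1,2)] ab False by (auto simp: transpose_def)
    have "sigma n (transpose 1 a 1) (transpose 1 a ?b) \<in> H"
      by (rule conj[OF gens(1) ab(1) gens(1) b(1) _ sigma1[OF b]]) (use b in simp)
    moreover have "transpose 1 a 1 = a" "transpose 1 a ?b = b" by (auto simp: transpose_def)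
    ultimately show ?thesis by simp
  qed
qed

theorem auto_W_subset_subgroup:
  assumes H: "subgroup H (AutW n)" and "2 \<le> n" and sigma12: "sigma n 1 2 \<in> H"
    and adj: "\<And>i. 1 \<le> i \<Longrightarrow> i + 1 \<le> n \<Longrightarrow> alpha n (transpose i (i + 1)) \<in> H"
  shows "auto (W n) \<subseteq> H"
proof
  fix \<phi> assume \<phi>: "\<phi> \<in> auto (W n)"
  then obtain f where "involutive_subst n f" "\<forall>k\<in>W_gens n. reduced (f k)" "\<phi> = W_subst n f"
    using auto_W_eq_W_subst by blast
  moreover note transp = alpha_transpose_in_subgroup[OF H adj]
  ultimately show "\<phi> \<in> H"
    using auto_W_subst_in_subgroup[OF H sigma_in_subgroup[OF H \<open>2 \<le> n\<close> sigma12 transp]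
        alpha_permutes_in_subgroup[OF H transp]] \<phi> by blast
qed

section \<open>The homomorphism \<open>G \<rightarrow> Aut(W\<^sub>n)\<close>\<close>

definition G_image_subst :: "nat \<Rightarrow> nat \<Rightarrow> nat list" where
  "G_image_subst j = (if j = 0 then sigma_subst 1 2 else alpha_subst (transpose j (j + 1)))"

definition G_image :: "nat \<Rightarrow> nat \<Rightarrow> nat list set \<Rightarrow> nat list set" where
  "G_image n j = (if j = 0 then sigma n 1 2 else alpha n (transpose j (j + 1)))"

definition G_word_subst :: "nat list \<Rightarrow> nat \<Rightarrow> nat list" where
  "G_word_subst r = foldr (\<lambda>a g. subst_comp (G_image_subst a) g) r (\<lambda>k. [k])"

lemma G_word_subst_simps [simp]:
  "G_word_subst [] k = [k]"
  "G_word_subst (a # r) k = concat (map (G_image_subst a) (G_word_subst r k))"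
  by (simp_all add: G_word_subst_def subst_comp_def)

lemma G_image_eq_W_subst: "G_image n j = W_subst n (G_image_subst j)"
  by (simp add: G_image_def G_image_subst_def sigma_eq_W_subst alpha_eq_W_subst)

lemma involutive_G_image_subst: "2 \<le> n \<Longrightarrow> j < n \<Longrightarrow> involutive_subst n (G_image_subst j)"
  unfolding G_image_subst_def
  by (auto intro!: involutive_sigma_subst involutive_alpha_subst transpose_in_W_gens simp: W_gens_iff)

lemma G_image_auto: "2 \<le> n \<Longrightarrow> j < n \<Longrightarrow> G_image n j \<in> auto (W n)"
  unfolding G_image_def by (auto intro!: sigma_auto alpha_transpose_auto simp: W_gens_iff)

lemma eval_word_G_image:
  assumes "2 \<le> n"
  shows "set r \<subseteq> G_gens n \<Longrightarrow> involutive_subst n (G_word_subst r) \<and> W_subst n (G_word_subst r) \<in> auto (W n)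
      \<and> eval_word (AutW n) (G_image n) r = W_subst n (G_word_subst r)"
proof (induction r)
  case Nil
  have "involutive_subst n (\<lambda>k. [k])" by (auto simp: involutive_subst_def)
  moreover have "\<one>\<^bsub>AutW n\<^esub> \<in> auto (W n)"
    using monoid.one_closed[OF group.is_monoid[OF group_AutW]] by (simp add: carrier_AutoGroup)
  ultimately show ?case by (simp add: one_AutW G_word_subst_def)
next
  case (Cons a r)
  have a: "a < n" using Cons.prems by (simp add: G_gens_def)
  have IH: "involutive_subst n (G_word_subst r)" "W_subst n (G_word_subst r) \<in> auto (W n)"
      "eval_word (AutW n) (G_image n) r = W_subst n (G_word_subst r)"
    using Cons by auto
  have ia: "involutive_subst n (G_image_subst a)" using involutive_G_image_subst[OF assms a] .
  have aa: "W_subst n (G_image_subst a) \<in> auto (W n)" using G_image_auto[OF assms a] by (simp add: G_image_eq_W_subst)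
  have comp: "subst_comp (G_image_subst a) (G_word_subst r) = G_word_subst (a # r)"
    by (simp add: G_word_subst_def)
  have "eval_word (AutW n) (G_image n) (a # r) = W_subst n (G_image_subst a) \<otimes>\<^bsub>AutW n\<^esub> W_subst n (G_word_subst r)"
    using IH(3) by (simp add: G_image_eq_W_subst)
  also have "\<dots> = W_subst n (G_word_subst (a # r))"
    using mult_AutW_W_subst[OF ia IH(1) aa IH(2)] comp by simp
  finally show ?case
    using mult_AutW_W_subst[OF ia IH(1) aa IH(2)] AutW_m_closed[OF aa IH(2)] involutive_subst_comp[OF ia IH(1)]
    unfolding comp by metis
qed

lemma eval_word_G_image_relator:
  assumes "2 \<le> n" "set r \<subseteq> G_gens n" "\<forall>k\<in>W_gens n. reduce (G_word_subst r k) = [k]"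
  shows "eval_word (AutW n) (G_image n) r = \<one>\<^bsub>AutW n\<^esub>"
proof -
  have e: "involutive_subst n (G_word_subst r)" "eval_word (AutW n) (G_image n) r = W_subst n (G_word_subst r)"
    using eval_word_G_image[OF assms(1,2)] by auto
  have "W_subst n (G_word_subst r) = W_subst n (\<lambda>k. [k])"
    by (rule W_subst_cong(1)[OF e(1)]) (use assms(3) in auto)
  thus ?thesis using e(2) by (simp add: one_AutW)
qed

lemma cox_word_2: "cox_word a b 2 = [a, b, a, b]"
  and cox_word_3: "cox_word a b 3 = [a, b, a, b, a, b]"
  and cox_word_4: "cox_word a b 4 = [a, b, a, b, a, b, a, b]"
  by (simp_all add: cox_word_def numeral_eq_Suc)

lemma G_word_subst_relator:
  assumes r: "r \<in> G_rels n" and k: "1 \<le> k"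
  shows "reduce (G_word_subst r k) = [k]"
proof -
  note defs = G_image_subst_def sigma_subst_def alpha_subst_def transpose_def
  have "reduce (G_word_subst [j, j] k) = [k]" for j
    using k by (cases "k = 2") (auto simp: defs)
  moreover have "reduce (G_word_subst (cox_word 0 2 4) k) = [k]"
    using k unfolding cox_word_4
    by (cases "k = 1 \<or> k = 2 \<or> k = 3") (auto simp: defs)
  moreover have "reduce (G_word_subst (cox_word 0 j 2) k) = [k]" if "3 \<le> j" for j
    using k that unfolding cox_word_2
    by (cases "k = 2 \<or> k = j \<or> k = j + 1") (auto simp: defs)
  moreover have "reduce (G_word_subst (cox_word i (i + 1) 3) k) = [k]" if "1 \<le> i" for i
    using that unfolding cox_word_3 by (auto simp: defs)
  moreover have "reduce (G_word_subst (cox_word i j 2) k) = [k]"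
    if "1 \<le> i" "1 \<le> j" "i + 2 \<le> j \<or> j + 2 \<le> i" for i j
    using that unfolding cox_word_2 by (auto simp: defs)
  ultimately show ?thesis using r unfolding G_rels_def by (auto split: if_splits)
qed

lemma G_relators_hold:
  assumes "2 \<le> n"
  shows "\<forall>r\<in>G_rels n. set r \<subseteq> G_gens n \<longrightarrow> eval_word (AutW n) (G_image n) r = \<one>\<^bsub>AutW n\<^esub>"
  using eval_word_G_image_relator[OF assms] G_word_subst_relator by (simp add: W_gens_iff)

lemma group_G: "group (G n)"
  unfolding G_def by (rule group_pres_group) (auto simp: G_gens_def G_rels_def)

lemma G_gen_in_carrier: "j < n \<Longrightarrow> G_gen n j \<in> carrier (G n)"
  unfolding G_gen_def G_def by (intro pcls_in_carrier) (simp add: G_gens_def)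

lemma G_image_in_carrier: "2 \<le> n \<Longrightarrow> G_image n ` G_gens n \<subseteq> carrier (AutW n)"
  using G_image_auto by (auto simp: G_gens_def carrier_AutoGroup)

lemma pres_lift_G_image_hom:
  "2 \<le> n \<Longrightarrow> pres_lift (AutW n) (G_image n) \<in> hom (G n) (AutW n)"
  unfolding G_def
  by (rule pres_lift_hom[OF group.is_monoid[OF group_AutW] G_image_in_carrier G_relators_hold])

lemma pres_lift_G_image_gen:
  assumes "2 \<le> n" "j < n"
  shows "pres_lift (AutW n) (G_image n) (G_gen n j) = G_image n j"
proof -
  have "pres_lift (AutW n) (G_image n) (G_gen n j) = eval_word (AutW n) (G_image n) [j]"
    unfolding G_gen_def
    by (rule pres_lift_pcls[OF group.is_monoid[OF group_AutW] G_image_in_carrier G_relators_hold])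
      (use assms in \<open>simp_all add: G_gens_def\<close>)
  thus ?thesis
    using G_image_auto[OF assms] monoid.r_one[OF group.is_monoid[OF group_AutW]]
    by (simp add: carrier_AutoGroup)
qed

theorem G_hom_onto_AutW:
  assumes "2 \<le> n"
  shows "\<exists>h. h \<in> hom (G n) (AutW n)
            \<and> h (G_gen n 0) = sigma n 1 2
            \<and> (\<forall>i. 1 \<le> i \<and> i \<le> n - 1 \<longrightarrow> h (G_gen n i) = alpha n (transpose i (i + 1)))
            \<and> h ` carrier (G n) = carrier (AutW n)"
proof (intro exI conjI allI impI)
  let ?h = "pres_lift (AutW n) (G_image n)"
  show hom: "?h \<in> hom (G n) (AutW n)" using pres_lift_G_image_hom[OF assms] .
  show h0: "?h (G_gen n 0) = sigma n 1 2" using pres_lift_G_image_gen[OF assms, of 0] assms by (simp add: G_image_def)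
  show hi: "?h (G_gen n i) = alpha n (transpose i (i + 1))" if "1 \<le> i \<and> i \<le> n - 1" for i
  proof -
    have "i < n" using that assms by linarith
    thus ?thesis using pres_lift_G_image_gen[OF assms, of i] that by (simp add: G_image_def)
  qed
  have "subgroup (?h ` carrier (G n)) (AutW n)"
    using hom group_G group_AutW by (intro group_hom.img_is_subgroup) (simp add: group_hom_def group_hom_axioms_def)
  moreover have "sigma n 1 2 \<in> ?h ` carrier (G n)"
    using image_eqI[where f = ?h, OF h0[symmetric]] G_gen_in_carrier[of 0 n] assms by simp
  moreover have "alpha n (transpose i (i + 1)) \<in> ?h ` carrier (G n)" if "1 \<le> i" "i + 1 \<le> n" for i
    using image_eqI[where f = ?h, OF hi[symmetric]] G_gen_in_carrier[of i n] that by simp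
  ultimately have "auto (W n) \<subseteq> ?h ` carrier (G n)" by (rule auto_W_subset_subgroup[OF _ assms])
  moreover have "?h ` carrier (G n) \<subseteq> carrier (AutW n)" using hom by (auto simp: hom_def)
  ultimately show "?h ` carrier (G n) = carrier (AutW n)" by (auto simp: carrier_AutoGroup)
qed

section \<open>A finite subgroup of \<open>Aut(W\<^sub>n)\<close>\<close>

definition fix_s1_words :: "nat \<Rightarrow> nat list set" where
  "fix_s1_words n = {[a] | a. 2 \<le> a \<and> a \<le> n} \<union> {[1, a, 1] | a. 2 \<le> a \<and> a \<le> n}"

definition fix_s1_substs :: "nat \<Rightarrow> (nat list set \<Rightarrow> nat list set) set" where
  "fix_s1_substs n = {W_subst n f | f. involutive_subst n f \<and> f 1 = [1]
                        \<and> (\<forall>k. 2 \<le> k \<and> k \<le> n \<longrightarrow> f k \<in> fix_s1_words n)}"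

lemma finite_fix_s1_substs: "finite (fix_s1_substs n)"
proof -
  let ?F = "PiE (W_gens n) (\<lambda>_. insert [1] (fix_s1_words n))"
  have "fix_s1_words n \<subseteq> (\<lambda>a. [a]) ` {..n} \<union> (\<lambda>a. [1, a, 1]) ` {..n}"
    by (auto simp: fix_s1_words_def)
  hence "finite (fix_s1_words n)" by (rule finite_subset) simp
  hence "finite ?F" by (simp add: finite_PiE finite_W_gens)
  moreover have "fix_s1_substs n \<subseteq> W_subst n ` ?F"
  proof
    fix x assume "x \<in> fix_s1_substs n"
    then obtain f where f: "x = W_subst n f" "f 1 = [1]" "\<forall>k. 2 \<le> k \<and> k \<le> n \<longrightarrow> f k \<in> fix_s1_words n"
      by (auto simp: fix_s1_substs_def)
    have "f k \<in> insert [1] (fix_s1_words n)" if "k \<in> W_gens n" for k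
      using f(2,3) that by (cases "k = 1") (auto simp: W_gens_iff)
    hence "restrict f (W_gens n) \<in> ?F" by (simp add: restrict_PiE_iff)
    moreover have "x = W_subst n (restrict f (W_gens n))" unfolding f(1) by (rule W_subst_restrict) simp
    ultimately show "x \<in> W_subst n ` ?F" by blast
  qed
  ultimately show ?thesis by (rule finite_surj)
qed

lemma fix_s1_substs_mult:
  assumes x: "x \<in> fix_s1_substs n" "x \<in> auto (W n)" and y: "y \<in> fix_s1_substs n" "y \<in> auto (W n)"
  shows "x \<otimes>\<^bsub>AutW n\<^esub> y \<in> fix_s1_substs n"
proof -
  obtain f where f: "x = W_subst n f" "involutive_subst n f" "f 1 = [1]"
      "\<forall>k. 2 \<le> k \<and> k \<le> n \<longrightarrow> f k \<in> fix_s1_words n"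
    using x(1) by (auto simp: fix_s1_substs_def)
  obtain g where g: "y = W_subst n g" "involutive_subst n g" "g 1 = [1]"
      "\<forall>k. 2 \<le> k \<and> k \<le> n \<longrightarrow> g k \<in> fix_s1_words n"
    using y(1) by (auto simp: fix_s1_substs_def)
  define h where "h k = reduce (subst_comp f g k)" for k
  have fg: "involutive_subst n (subst_comp f g)" by (rule involutive_subst_comp[OF f(2) g(2)])
  have "\<forall>k\<in>W_gens n. set (h k) \<subseteq> W_gens n \<and> reduce (subst_comp f g k) = reduce (h k)"
    using fg set_reduce by (fastforce simp: h_def involutive_subst_def)
  note cong = W_subst_cong[OF fg this]
  have "h 1 = [1]" using f(3) g(3) by (simp add: h_def subst_comp_def)
  moreover have "h k \<in> fix_s1_words n" if k: "2 \<le> k" "k \<le> n" for k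
  proof -
    obtain a where a: "2 \<le> a" "a \<le> n" "g k = [a] \<or> g k = [1, a, 1]"
      using g(4) k by (auto simp: fix_s1_words_def)
    then obtain b where "2 \<le> b" "b \<le> n" "f a = [b] \<or> f a = [1, b, 1]"
      using f(4) by (auto simp: fix_s1_words_def)
    thus ?thesis using a(3) f(3) by (auto simp: h_def subst_comp_def fix_s1_words_def)
  qed
  moreover have "x \<otimes>\<^bsub>AutW n\<^esub> y = W_subst n h"
    using mult_AutW_W_subst[OF f(2) g(2)] x(2) y(2) f(1) g(1) cong(1) by simp
  ultimately show ?thesis using cong(2) unfolding fix_s1_substs_def by blast
qed

lemma one_in_fix_s1_substs: "\<one>\<^bsub>AutW n\<^esub> \<in> fix_s1_substs n"
  unfolding one_AutW fix_s1_substs_def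
  by (auto simp: involutive_subst_def fix_s1_words_def intro!: exI[of _ "\<lambda>k. [k]"])

lemma sigma12_in_fix_s1_substs: "2 \<le> n \<Longrightarrow> sigma n 1 2 \<in> fix_s1_substs n"
  unfolding fix_s1_substs_def sigma_eq_W_subst
  by (auto simp: sigma_subst_def fix_s1_words_def W_gens_iff
      intro!: exI[of _ "sigma_subst 1 2"] involutive_sigma_subst)

lemma alpha_transpose_in_fix_s1_substs:
  assumes "2 \<le> i" "i + 1 \<le> n"
  shows "alpha n (transpose i (i + 1)) \<in> fix_s1_substs n"
  unfolding fix_s1_substs_def alpha_eq_W_subst
proof (intro CollectI exI conjI)
  show "involutive_subst n (alpha_subst (transpose i (i + 1)))"
    using assms by (intro involutive_alpha_subst ballI transpose_in_W_gens) (auto simp: W_gens_iff)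
  show "alpha_subst (transpose i (i + 1)) 1 = [1]" using assms by (simp add: alpha_subst_def transpose_def)
  show "\<forall>k. 2 \<le> k \<and> k \<le> n \<longrightarrow> alpha_subst (transpose i (i + 1)) k \<in> fix_s1_words n"
    using assms by (auto simp: alpha_subst_def transpose_def fix_s1_words_def)
qed simp

lemma (in group) generate_involutions_subset:
  assumes "S \<subseteq> carrier G" "\<And>s. s \<in> S \<Longrightarrow> s \<otimes> s = \<one>" "S \<subseteq> M" "\<one> \<in> M"
    and "\<And>x y. x \<in> M \<Longrightarrow> x \<in> carrier G \<Longrightarrow> y \<in> M \<Longrightarrow> y \<in> carrier G \<Longrightarrow> x \<otimes> y \<in> M"
  shows "generate G S \<subseteq> M"
proof -
  have "x \<in> M \<and> x \<in> carrier G" if "x \<in> generate G S" for x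
    using that
  proof (induction rule: generate.induct)
    case (inv h)
    hence "inv h = h" using assms(1,2) inv_equality by blast
    thus ?case using inv assms(1,3) by auto
  qed (use assms in auto)
  thus ?thesis by blast
qed

theorem finite_generate_sigma_alpha:
  assumes "2 \<le> n"
  shows "finite (generate (AutW n)
            ({sigma n 1 2} \<union> {alpha n (transpose i (i + 1)) | i. 2 \<le> i \<and> i \<le> n - 1}))"
    (is "finite (generate _ ?S)")
proof (rule finite_subset[OF _ finite_fix_s1_substs])
  have gens: "1 \<in> W_gens n" "2 \<in> W_gens n" and "\<And>i. 2 \<le> i \<Longrightarrow> i \<le> n - 1 \<Longrightarrow> i + 1 \<le> n"
    using assms by (auto simp: W_gens_iff)
  hence "?S \<subseteq> carrier (AutW n)" "\<And>s. s \<in> ?S \<Longrightarrow> s \<otimes>\<^bsub>AutW n\<^esub> s = \<one>\<^bsub>AutW n\<^esub>"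
      "?S \<subseteq> fix_s1_substs n"
    using sigma_auto[OF gens] sigma_square[OF gens] sigma12_in_fix_s1_substs[OF assms]
      alpha_transpose_auto alpha_transpose_square alpha_transpose_in_fix_s1_substs
    by (auto simp: carrier_AutoGroup W_gens_iff)
  thus "generate (AutW n) ?S \<subseteq> fix_s1_substs n"
    by (rule group.generate_involutions_subset[OF group_AutW _ _ _ one_in_fix_s1_substs])
      (auto intro: fix_s1_substs_mult simp: carrier_AutoGroup)
qed

theorem corollary2p2:
  fixes n :: nat
  assumes "2 \<le> n"
  shows "(\<exists>h. h \<in> hom (G n) (AutoGroup (W n))
            \<and> h (G_gen n 0) = sigma n 1 2
            \<and> (\<forall>i. 1 \<le> i \<and> i \<le> n - 1 \<longrightarrow> h (G_gen n i) = alpha n (transpose i (i + 1)))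
            \<and> h ` carrier (G n) = carrier (AutoGroup (W n)))
       \<and> finite (generate (AutoGroup (W n))
            ({sigma n 1 2} \<union> {alpha n (transpose i (i + 1)) | i. 2 \<le> i \<and> i \<le> n - 1}))"
  using G_hom_onto_AutW[OF assms] finite_generate_sigma_alpha[OF assms] by blast

end
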